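(* Every irreducible $\lambda$-quiddity over the ring $(\mathbb{Z}/2\mathbb{Z})\times(\mathbb{Z}/4\mathbb{Z})$ has size $3$, $4$ or $6$.
   Context: For $a_1,\ldots,a_n$ in a commutative unital ring $A$, $M_n(a_1,\ldots,a_n)=\begin{pmatrix}a_n&-1\\1&0\end{pmatrix}\cdots\begin{pmatrix}a_1&-1\\1&0\end{pmatrix}$. An $n$-tuple $(a_1,\ldots,a_n)\in A^n$ is a $\lambda$-quiddity over $A$ of size $n$ if $M_n(a_1,\ldots,a_n)=\pm\mathrm{Id}$. For $(a_1,\ldots,a_n)\in A^n$, $(b_1,\ldots,b_m)\in A^m$, define $(a_1,\ldots,a_n)\oplus(b_1,\ldots,b_m)=(a_1+b_m,a_2,\ldots,a_{n-1},a_n+b_1,b_2,\ldots,b_{m-1})$. Write $(a_1,\ldots,a_n)\sim(b_1,\ldots,b_n)$ if $(b_1,\ldots,b_n)$ is obtained from $(a_1,\ldots,a_n)$ or from $(a_n,\ldots,a_1)$ by a cyclic permutation. A $\lambda$-quiddity $(c_1,\ldots,c_n)$ with $n\ge3$ is reducible if there exist a $\lambda$-quiddity $(b_1,\ldots,b_l)$ and a tuple $(a_1,\ldots,a_m)$ with $l,m\ge3$ and $(c_1,\ldots,c_n)\sim(a_1,\ldots,a_m)\oplus(b_1,\ldots,b_l)$; it is irreducible otherwise (by convention $(0,0)$ is reducible). *)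

theory Defs
  imports Main "HOL-Library.Numeral_Type" "HOL-Library.Product_Plus"
begin

instantiation prod :: (times, times) times
begin
definition times_prod_def: "x * y = (fst x * fst y, snd x * snd y)"
instance ..
end

instantiation prod :: (one, one) one
begin
definition one_prod_def: "1 = (1, 1)"
instance ..
end

lemma fst_mult_prod [simp]: "fst (x * y) = fst x * fst y"
  and snd_mult_prod [simp]: "snd (x * y) = snd x * snd y"
  and fst_one_prod [simp]: "fst (1 :: 'a::one \<times> 'b::one) = 1"
  and snd_one_prod [simp]: "snd (1 :: 'a::one \<times> 'b::one) = 1"
  by (simp_all add: times_prod_def one_prod_def)

instance prod :: (comm_ring_1, comm_ring_1) comm_ring_1
  by standard (auto simp: prod_eq_iff algebra_simps)

section \<open>2x2 matrices over a commutative ring, as tuples (a11, a12, a21, a22)\<close>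

type_synonym 'a mat2 = "'a \<times> 'a \<times> 'a \<times> 'a"

definition mat2_mult :: "'a::comm_ring_1 mat2 \<Rightarrow> 'a mat2 \<Rightarrow> 'a mat2" where
  "mat2_mult A B = (case A of (a, b, c, d) \<Rightarrow> case B of (e, f, g, h) \<Rightarrow>
      (a * e + b * g, a * f + b * h, c * e + d * g, c * f + d * h))"

definition mat2_id :: "'a::comm_ring_1 mat2" where
  "mat2_id = (1, 0, 0, 1)"

definition mat2_elem :: "'a::comm_ring_1 \<Rightarrow> 'a mat2" where
  "mat2_elem a = (a, -1, 1, 0)"

text \<open>M_n(a_1,...,a_n) = elem(a_n) * ... * elem(a_1); the list [a_1,...,a_n] is the tuple.\<close>
definition Mn :: "'a::comm_ring_1 list \<Rightarrow> 'a mat2" where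
  "Mn as = fold (\<lambda>a M. mat2_mult (mat2_elem a) M) as mat2_id"

definition lambda_quiddity :: "'a::comm_ring_1 list \<Rightarrow> bool" where
  "lambda_quiddity c \<longleftrightarrow> length c \<ge> 1 \<and>
     (Mn c = mat2_id \<or> Mn c = (-1, 0, 0, -1))"

text \<open>(a_1..a_n) \<oplus> (b_1..b_m) = (a_1+b_m, a_2, ..., a_{n-1}, a_n+b_1, b_2, ..., b_{m-1})
  (used only for n, m \<ge> 3).\<close>
definition qsum :: "'a::comm_ring_1 list \<Rightarrow> 'a list \<Rightarrow> 'a list" where
  "qsum a b = [a ! 0 + b ! (length b - 1)] @ take (length a - 2) (drop 1 a)
      @ [a ! (length a - 1) + b ! 0] @ take (length b - 2) (drop 1 b)"

definition qequiv :: "'a list \<Rightarrow> 'a list \<Rightarrow> bool" where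
  "qequiv a b \<longleftrightarrow> (\<exists>k. b = rotate k a \<or> b = rotate k (rev a))"

definition reducible_quiddity :: "'a::comm_ring_1 list \<Rightarrow> bool" where
  "reducible_quiddity c \<longleftrightarrow> c = [0, 0] \<or>
     (length c \<ge> 3 \<and> (\<exists>a b. lambda_quiddity b \<and> length b \<ge> 3 \<and> length a \<ge> 3 \<and>
        qequiv c (qsum a b)))"

definition irreducible_quiddity :: "'a::comm_ring_1 list \<Rightarrow> bool" where
  "irreducible_quiddity c \<longleftrightarrow> lambda_quiddity c \<and> \<not> reducible_quiddity c"

end

theory Submission imports Defs begin

text \<open>
  A \<lambda>-quiddity c is reducible as soon as some nonempty cyclic factor w of c, whose
  complement has at least three entries, is extendable, i.e. x # w @ [y] is a \<lambda>-quiddity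
  for suitable x, y.  Over any ring the entries \<plusminus>1 are extendable (size-3 quiddities
  (1,1,1), (-1,-1,-1)), and so is every pair u, v with u v \<in> {0, 2} (size-4 quiddities
  (a,b,-a,-b) with a b = 0 and (a,b,a,b) with a b = 2).  In (\<int>/2) \<times> (\<int>/4), two adjacent
  entries avoiding both situations lie both in {0} \<times> {1,3} or both in {1} \<times> {0,2}.
  So all entries of an irreducible quiddity of size 5 lie in one of these classes, which is
  impossible already for the first components; in size at least 7 the first four entries lie
  in one class, and a direct check shows that such words of length 4 are extendable.  Size 1
  is impossible and size 2 forces (0,0), reducible by convention.
\<close>

lemmas Mn_simps = Mn_def mat2_mult_def mat2_elem_def mat2_id_def

lemma lambda_quiddity_ones: "lambda_quiddity [1, 1, 1 :: 'a::comm_ring_1]"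
  and lambda_quiddity_minus_ones: "lambda_quiddity [-1, -1, -1 :: 'a::comm_ring_1]"
  by (simp_all add: lambda_quiddity_def Mn_simps)

lemma lambda_quiddity_antiperiodic:
  fixes a b :: "'a::comm_ring_1"
  assumes "a * b = 0"
  shows "lambda_quiddity [a, b, -a, -b]"
  using assms by (simp add: lambda_quiddity_def Mn_simps algebra_simps mult.commute[of b a])

lemma lambda_quiddity_periodic:
  fixes a b :: "'a::comm_ring_1"
  assumes "a * b = 2"
  shows "lambda_quiddity [a, b, a, b]"
  using assms by (simp add: lambda_quiddity_def Mn_simps algebra_simps mult.commute[of b a])

lemma not_lambda_quiddity_singleton: "\<not> lambda_quiddity [a :: 'a::comm_ring_1]"
  by (simp add: lambda_quiddity_def Mn_simps)

lemma lambda_quiddity_pair_zero: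
  "lambda_quiddity [a, b :: 'a::comm_ring_1] \<Longrightarrow> a = 0 \<and> b = 0"
  by (auto simp add: lambda_quiddity_def Mn_simps)

abbreviation mat2_fst :: "('a \<times> 'b) mat2 \<Rightarrow> 'a mat2" where
  "mat2_fst \<equiv> map_prod fst (map_prod fst (map_prod fst fst))"

lemma Mn_map_fst:
  fixes c :: "('a::comm_ring_1 \<times> 'b::comm_ring_1) list"
  shows "Mn (map fst c) = mat2_fst (Mn c)"
proof -
  have step: "mat2_fst (mat2_mult (mat2_elem a) M) = mat2_mult (mat2_elem (fst a)) (mat2_fst M)"
    for a and M :: "('a \<times> 'b) mat2"
    by (cases a; cases M) (auto simp: mat2_mult_def mat2_elem_def)
  have "fold (\<lambda>a M. mat2_mult (mat2_elem a) M) (map fst c) (mat2_fst M)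
      = mat2_fst (fold (\<lambda>a M. mat2_mult (mat2_elem a) M) c M)" for M
    by (induction c arbitrary: M) (simp_all flip: step)
  from this[of mat2_id] show ?thesis by (simp add: Mn_def mat2_id_def)
qed

lemma lambda_quiddity_map_fst:
  fixes c :: "('a::comm_ring_1 \<times> 'b::comm_ring_1) list"
  assumes "lambda_quiddity c"
  shows "lambda_quiddity (map fst c)"
  using assms by (auto simp: lambda_quiddity_def Mn_map_fst mat2_id_def)

definition extendable :: "'a::comm_ring_1 list \<Rightarrow> bool" where
  "extendable w \<longleftrightarrow> (\<exists>x y. lambda_quiddity (x # w @ [y]))"

lemma extendable_singleton:
  fixes a :: "'a::comm_ring_1"
  assumes "a = 1 \<or> a = -1"
  shows "extendable [a]"
  using assms lambda_quiddity_ones lambda_quiddity_minus_ones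
  unfolding extendable_def by fastforce

lemma extendable_pair:
  fixes a b :: "'a::comm_ring_1"
  assumes "a * b = 0 \<or> a * b = 2"
  shows "extendable [a, b]"
proof -
  have "lambda_quiddity [-b, a, b, -a] \<or> lambda_quiddity [b, a, b, a]"
    using assms lambda_quiddity_antiperiodic[of "-b" a] lambda_quiddity_periodic[of b a]
    by (auto simp: mult.commute)
  then show ?thesis unfolding extendable_def by fastforce
qed

text \<open>The second summand of the decomposition is x # w @ [y]; the first one is the
  complement of w with its two end entries corrected by -y and -x.\<close>
lemma reducible_quiddity_if_extendable_factor:
  fixes w :: "'a::comm_ring_1 list"
  assumes "extendable w" and "w \<noteq> []" and "length u + length v \<ge> 3"
  shows "reducible_quiddity (u @ w @ v)"
proof -
  obtain x y where q: "lambda_quiddity (x # w @ [y])"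
    using assms(1) unfolding extendable_def by blast
  obtain r0 mid rl where r: "v @ u = r0 # mid @ [rl]"
  proof (cases "v @ u" rule: rev_cases)
    case (snoc ys rl)
    have "length ys + 1 = length u + length v" using arg_cong[OF snoc, of length] by simp
    with assms(3) have "ys \<noteq> []" by auto
    then obtain r0 mid where "ys = r0 # mid" by (cases ys) auto
    with snoc that show ?thesis by simp
  qed (use assms(3) in auto)
  define a where "a = (r0 - y) # mid @ [rl - x]"
  define b where "b = x # w @ [y]"
  have "qsum a b = v @ u @ w"
    using r by (simp add: qsum_def a_def b_def nth_append)
  also have "\<dots> = rotate (length (u @ w)) ((u @ w) @ v)"
    by (metis rotate_append append_assoc)
  finally have "qequiv (u @ w @ v) (qsum a b)"
    unfolding qequiv_def by auto
  moreover have "length a \<ge> 3" using arg_cong[OF r, of length] assms(3) by (simp add: a_def)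
  moreover have "length b \<ge> 3" using assms(2) by (cases w) (auto simp: b_def)
  ultimately show ?thesis
    using q assms(3) unfolding reducible_quiddity_def b_def by auto
qed

lemma mult_Pair [simp]: "(a, b) * (c, d) = (a * c, b * d)"
  by (simp add: times_prod_def)

lemma numeral_Pair: "(numeral k :: 'a::comm_ring_1 \<times> 'b::comm_ring_1) = (numeral k, numeral k)"
  by (induction k) (simp_all only: numeral_One numeral_Bit0 numeral_Bit1 one_prod_def add_Pair)

lemmas Pair_ring_simps = numeral_Pair one_prod_def zero_prod_def

lemma elements_2x4:
  fixes u :: "2 \<times> 4"
  shows "u \<in> {(0, 0), (0, 1), (0, 2), (0, 3), (1, 0), (1, 1), (1, 2), (1, 3)}"
proof -
  have "(a :: 2) \<in> {0, 1}" for a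
  proof (cases a)
    case (of_int z)
    then have "z = 0 \<or> z = 1" by auto
    with of_int show ?thesis by auto
  qed
  moreover have "(b :: 4) \<in> {0, 1, 2, 3}" for b
  proof (cases b)
    case (of_int z)
    then have "z = 0 \<or> z = 1 \<or> z = 2 \<or> z = 3" by auto
    with of_int show ?thesis by auto
  qed
  ultimately show ?thesis by (cases u) auto
qed

lemma same_class_if_not_extendable:
  fixes u v :: "2 \<times> 4"
  assumes "\<not> extendable [u]" "\<not> extendable [v]" "\<not> extendable [u, v]"
  shows "{u, v} \<subseteq> {0} \<times> {1, 3} \<or> {u, v} \<subseteq> {1} \<times> {0, 2}"
proof -
  have "u \<notin> {1, -1}" "v \<notin> {1, -1}" "u * v \<notin> {0, 2}"
    using assms extendable_singleton extendable_pair by blast+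
  then show ?thesis
    using elements_2x4[of u] elements_2x4[of v] unfolding insert_iff empty_iff
    by (elim disjE) (simp_all add: Pair_ring_simps)
qed

lemma same_class_if_short_factors_not_extendable:
  fixes w :: "(2 \<times> 4) list"
  assumes "\<And>u x v. w = u @ x @ v \<Longrightarrow> x \<noteq> [] \<Longrightarrow> length x \<le> 2 \<Longrightarrow> \<not> extendable x"
    and "length w \<ge> 2"
  shows "set w \<subseteq> {0} \<times> {1, 3} \<or> set w \<subseteq> {1} \<times> {0, 2}"
  using assms
proof (induction w rule: induct_list012)
  case (3 a b w)
  have ab: "{a, b} \<subseteq> {0} \<times> {1, 3} \<or> {a, b} \<subseteq> {1} \<times> {0, 2}"
    using same_class_if_not_extendable 3(3)[of "[]" "[a]" "b # w"] 3(3)[of "[a]" "[b]" w]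
      3(3)[of "[]" "[a, b]" w]
    by auto
  show ?case
  proof (cases w)
    case Nil
    with ab show ?thesis by simp
  next
    case Cons
    have "set (b # w) \<subseteq> {0} \<times> {1, 3} \<or> set (b # w) \<subseteq> {1} \<times> {0, 2}"
      using 3(2) 3(3)[of "a # _"] Cons by auto
    with ab show ?thesis by auto
  qed
qed simp_all

lemma extendable_four_same_class:
  fixes p q s t :: "2 \<times> 4"
  assumes "{p, q, s, t} \<subseteq> {0} \<times> {1, 3} \<or> {p, q, s, t} \<subseteq> {1} \<times> {0, 2}"
  shows "extendable [p, q, s, t]"
proof -
  have "{p, q, s, t} \<subseteq> {0} \<times> {1, 3} \<Longrightarrow>
      \<exists>x \<in> {0} \<times> {1, 3}. \<exists>y \<in> {0} \<times> {1, 3}. lambda_quiddity [x, p, q, s, t, y]"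
    and "{p, q, s, t} \<subseteq> {1} \<times> {0, 2} \<Longrightarrow>
      \<exists>x \<in> {1} \<times> {0, 2}. \<exists>y \<in> {1} \<times> {0, 2}. lambda_quiddity [x, p, q, s, t, y]"
    unfolding insert_subset
    by (elim conjE; simp; elim disjE; simp add: lambda_quiddity_def Mn_simps Pair_ring_simps)+
  with assms have "\<exists>x y. lambda_quiddity [x, p, q, s, t, y]" by blast
  then show ?thesis unfolding extendable_def by simp
qed

lemma not_lambda_quiddity_five_same_class:
  fixes w :: "(2 \<times> 4) list"
  assumes "length w = 5" and "set w \<subseteq> {0} \<times> {1, 3} \<or> set w \<subseteq> {1} \<times> {0, 2}"
  shows "\<not> lambda_quiddity w"
proof
  assume "lambda_quiddity w"
  then have "lambda_quiddity (map fst w)" by (rule lambda_quiddity_map_fst)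
  moreover have "map fst w = replicate 5 0 \<or> map fst w = replicate 5 1"
  proof -
    have "(\<forall>x \<in> set w. fst x = 0) \<or> (\<forall>x \<in> set w. fst x = 1)"
      using assms(2) by auto
    then show ?thesis using assms(1) by (auto intro: replicate_eqI)
  qed
  ultimately show False by (auto simp: lambda_quiddity_def Mn_simps numeral_eq_Suc)
qed

theorem proposition4p3:
  fixes c :: "(2 \<times> 4) list"
  assumes "irreducible_quiddity c"
  shows "length c \<in> {3, 4, 6}"
proof (rule ccontr)
  assume length_c: "length c \<notin> {3, 4, 6}"
  have quid: "lambda_quiddity c" and not_red: "\<not> reducible_quiddity c"
    using assms unfolding irreducible_quiddity_def by auto
  have no_ext: "\<not> extendable x"
    if "c = u @ x @ v" "x \<noteq> []" "length u + length v \<ge> 3" for u x v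
    using not_red reducible_quiddity_if_extendable_factor that by blast
  consider "length c = 1" | "length c = 2" | "length c = 5" | "length c \<ge> 7"
    using length_c quid unfolding lambda_quiddity_def by force
  then show False
  proof cases
    case 1
    then obtain a where "c = [a]" by (cases c) auto
    with quid show False using not_lambda_quiddity_singleton by blast
  next
    case 2
    then obtain a b where "c = [a, b]" by (cases c; cases "tl c") auto
    with quid not_red show False
      using lambda_quiddity_pair_zero unfolding reducible_quiddity_def by blast
  next
    case 3
    then have "set c \<subseteq> {0} \<times> {1, 3} \<or> set c \<subseteq> {1} \<times> {0, 2}"
      using no_ext
      by (intro same_class_if_short_factors_not_extendable) (auto dest: arg_cong[of _ _ length])
    with 3 quid show False using not_lambda_quiddity_five_same_class by blast
  next
    case 4
    then obtain p q s t r where c: "c = [p, q, s, t] @ r" and "length r \<ge> 3"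
      by (cases c; cases "tl c"; cases "tl (tl c)"; cases "tl (tl (tl c))") auto
    then have "set [p, q, s, t] \<subseteq> {0} \<times> {1, 3} \<or> set [p, q, s, t] \<subseteq> {1} \<times> {0, 2}"
      using no_ext[of _ _ "_ @ r"]
      by (intro same_class_if_short_factors_not_extendable) (auto dest: arg_cong[of _ _ length])
    then have "extendable [p, q, s, t]" by (intro extendable_four_same_class) simp
    with no_ext[of "[]" _ r] c \<open>length r \<ge> 3\<close> show False by simp
  qed
qed

end
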